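(* Let $(X,d_X)$ be a metric space and $(Y,d_Y)$ a metric space with the uniform Stone property, i.e. $\Delta_Y^{(u)}(r)>0$ for all $r>0$. If there exists a uniform embedding $f\colon X\to Y$, then $X$ has the uniform Stone property, i.e. $\Delta_X^{(u)}(r)>0$ for all $r>0$. If $f$ is a bi-Lipschitz embedding and there is $c>0$ such that $\Delta_Y^{(u)}(r)\geq cr$ for all $r>0$, then $\Delta_X^{(u)}(r)\geq \frac{c}{\mathrm{dist}(f)}r$ for all $r>0$.
   Context: For a metric space $X$ and a cover $\mathcal{U}$ of $X$: $\mathrm{diam}(\mathcal{U})=\sup_{U\in\mathcal{U}}\mathrm{diam}(U)$; $\mathcal{L}(\mathcal{U})=\sup\{d\in[0,\infty): \text{every } E\subseteq X \text{ with } \mathrm{diam}(E)<d \text{ is contained in some } U\in\mathcal{U}\}$; $\mathcal{U}$ is point-finite if each point lies in only finitely many members. $\Delta_X^{(u)}(r)=\sup\{\mathcal{L}(\mathcal{U}): \mathcal{U} \text{ a point-finite cover of } X,\ \mathrm{diam}(\mathcal{U})\leq r\}$. For $f\colon X\to Y$: $\omega_f(t)=\sup\{d_Y(f(x_1),f(x_2)): d_X(x_1,x_2)\leq t\}$, $\rho_f(t)=\inf\{d_Y(f(x_1),f(x_2)): d_X(x_1,x_2)\geq t\}$; $f$ is a uniform embedding if $\lim_{t\to0}\omega_f(t)=0$ and $\rho_f(t)>0$ for all $t>0$; a bi-Lipschitz embedding if there is $A\geq1$ with $\omega_f(t)\leq At$, $\rho_f(t)\geq t/A$. $\mathrm{Lip}(f)=\sup_{x_1\neq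 x_2} d_Y(f(x_1),f(x_2))/d_X(x_1,x_2)$, and for injective $f$, $\mathrm{dist}(f)=\mathrm{Lip}(f)\cdot\mathrm{Lip}(f^{-1})$. *)

theory Defs
  imports "HOL-Analysis.Analysis"
begin

definition ediam :: "'a::metric_space set \<Rightarrow> ereal" where
  "ediam E = (if E = {} then 0 else (SUP p \<in> E \<times> E. ereal (dist (fst p) (snd p))))"

definition cover_diam :: "'a::metric_space set set \<Rightarrow> ereal" where
  "cover_diam \<U> = (SUP U \<in> \<U>. ediam U)"

definition lebesgue_number :: "'a::metric_space set \<Rightarrow> 'a set set \<Rightarrow> ereal" where
  "lebesgue_number S \<U> =
     (SUP d \<in> {d::real. 0 \<le> d \<and>
        (\<forall>E. E \<subseteq> S \<and> ediam E < ereal d \<longrightarrow> (\<exists>U\<in>\<U>. E \<subseteq> U))}. ereal d)"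

definition point_finite :: "'a set set \<Rightarrow> bool" where
  "point_finite \<U> \<longleftrightarrow> (\<forall>x. finite {U \<in> \<U>. x \<in> U})"

definition is_cover :: "'a set \<Rightarrow> 'a set set \<Rightarrow> bool" where
  "is_cover S \<U> \<longleftrightarrow> (\<forall>U\<in>\<U>. U \<subseteq> S) \<and> \<Union>\<U> = S"

definition Delta_u :: "'a::metric_space set \<Rightarrow> real \<Rightarrow> ereal" where
  "Delta_u S r = (SUP \<U> \<in> {\<U>. is_cover S \<U> \<and> point_finite \<U> \<and> cover_diam \<U> \<le> ereal r}.
                    lebesgue_number S \<U>)"

definition modulus_cont :: "('a::metric_space \<Rightarrow> 'b::metric_space) \<Rightarrow> real \<Rightarrow> ereal" where
  "modulus_cont f t = (SUP p \<in> {p. dist (fst p) (snd p) \<le> t}. ereal (dist (f (fst p)) (f (snd p))))"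

definition modulus_exp :: "('a::metric_space \<Rightarrow> 'b::metric_space) \<Rightarrow> real \<Rightarrow> ereal" where
  "modulus_exp f t = (INF p \<in> {p. dist (fst p) (snd p) \<ge> t}. ereal (dist (f (fst p)) (f (snd p))))"

definition uniform_embedding :: "('a::metric_space \<Rightarrow> 'b::metric_space) \<Rightarrow> bool" where
  "uniform_embedding f \<longleftrightarrow> ((modulus_cont f \<longlongrightarrow> 0) (at_right 0)) \<and> (\<forall>t>0. modulus_exp f t > 0)"

definition bilipschitz_embedding :: "('a::metric_space \<Rightarrow> 'b::metric_space) \<Rightarrow> bool" where
  "bilipschitz_embedding f \<longleftrightarrow> (\<exists>A\<ge>1. \<forall>t. modulus_cont f t \<le> ereal (A * t) \<and> modulus_exp f t \<ge> ereal (t / A))"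

definition Lip_on :: "'a::metric_space set \<Rightarrow> ('a \<Rightarrow> 'b::metric_space) \<Rightarrow> ereal" where
  "Lip_on S g = (SUP p \<in> {p. fst p \<in> S \<and> snd p \<in> S \<and> fst p \<noteq> snd p}.
                   ereal (dist (g (fst p)) (g (snd p)) / dist (fst p) (snd p)))"

definition distortion :: "('a::metric_space \<Rightarrow> 'b::metric_space) \<Rightarrow> ereal" where
  "distortion f = Lip_on UNIV f * Lip_on (range f) (inv f)"

end

theory Submission
  imports Defs
begin

text \<open>Pull back along \<open>f\<close> a point-finite cover of \<open>Y\<close> of small diameter and positive Lebesgue
  number. The expansion modulus of \<open>f\<close> keeps the preimages of diameter at most \<open>r\<close>, and the
  continuity modulus of \<open>f\<close> turns the Lebesgue number of the cover of \<open>Y\<close> into one for the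
  preimage cover.
  For a bi-Lipschitz map with constants \<open>L\<^sub>1 = Lip(f)\<close> and \<open>L\<^sub>2 = Lip(f\<inverse>)\<close>, a cover of \<open>Y\<close> of
  diameter \<open>r/L\<^sub>2\<close> with Lebesgue number close to \<open>c r/L\<^sub>2\<close> pulls back to a cover of \<open>X\<close> of
  diameter \<open>r\<close> with Lebesgue number close to \<open>c r/(L\<^sub>1 L\<^sub>2)\<close>.\<close>

lemma dist_le_ediam: "x \<in> E \<Longrightarrow> y \<in> E \<Longrightarrow> ereal (dist x y) \<le> ediam E"
  unfolding ediam_def by (auto intro!: SUP_upper2[of "(x, y)"])

lemma ediam_le:
  "(\<And>x y. x \<in> E \<Longrightarrow> y \<in> E \<Longrightarrow> ereal (dist x y) \<le> B) \<Longrightarrow> 0 \<le> B \<Longrightarrow> ediam E \<le> B"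
  unfolding ediam_def by (auto intro!: SUP_least)

lemma ediam_nonneg: "0 \<le> ediam E"
proof (cases "E = {}")
  case False
  then obtain x where "x \<in> E" by auto
  from dist_le_ediam[OF this this] show ?thesis by (simp add: zero_ereal_def)
qed (simp add: ediam_def)

lemma ediam_image_le:
  assumes "\<And>x y. x \<in> E \<Longrightarrow> y \<in> E \<Longrightarrow> ereal (dist (f x) (f y)) \<le> B" and "0 \<le> B"
  shows "ediam (f ` E) \<le> B"
  using assms by (auto intro!: ediam_le)

lemma ediam_lessE:
  assumes "ediam E < ereal \<delta>"
  obtains e where "0 < e" "e < \<delta>" "\<And>x y. x \<in> E \<Longrightarrow> y \<in> E \<Longrightarrow> dist x y \<le> e"
proof -
  obtain e where e: "ediam E < ereal e" "ereal e < ereal \<delta>"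
    using ereal_dense2[OF assms] by blast
  have "0 < e"
    using le_less_trans[OF ediam_nonneg e(1)] by (simp add: zero_ereal_def)
  moreover have "dist x y \<le> e" if "x \<in> E" "y \<in> E" for x y
    using le_less_trans[OF dist_le_ediam[OF that] e(1)] by simp
  ultimately show thesis using that e(2) by simp
qed

lemma dist_le_modulus_cont: "dist x y \<le> t \<Longrightarrow> ereal (dist (f x) (f y)) \<le> modulus_cont f t"
  unfolding modulus_cont_def by (auto intro!: SUP_upper2[of "(x, y)"])

lemma modulus_exp_le_dist: "t \<le> dist x y \<Longrightarrow> modulus_exp f t \<le> ereal (dist (f x) (f y))"
  unfolding modulus_exp_def by (auto intro!: INF_lower2[of "(x, y)"])

lemma modulus_cont_nonneg: "0 \<le> t \<Longrightarrow> 0 \<le> modulus_cont f t"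
  using dist_le_modulus_cont[of undefined undefined t f] by (simp add: zero_ereal_def)

lemma uniform_embedding_if_bilipschitz:
  assumes "A > 0"
    and Lip: "\<And>x y. dist (f x) (f y) \<le> A * dist x y"
    and co_Lip: "\<And>x y. dist x y \<le> A * dist (f x) (f y)"
  shows "uniform_embedding f"
  unfolding uniform_embedding_def
proof
  have upper: "modulus_cont f t \<le> ereal (A * t)" for t
    unfolding modulus_cont_def using Lip \<open>A > 0\<close>
    by (auto intro!: SUP_least order.trans[OF Lip] mult_left_mono)
  have lower: "\<forall>\<^sub>F t in at_right 0. 0 \<le> modulus_cont f t"
    using eventually_at_right_less[of 0] by eventually_elim (simp add: modulus_cont_nonneg)
  have bounded: "\<forall>\<^sub>F t in at_right 0. modulus_cont f t \<le> ereal (A * t)"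
    using upper by (intro always_eventually) blast
  have "((\<lambda>t. ereal (A * t)) \<longlongrightarrow> ereal (A * 0)) (at_right 0)"
    by (intro tendsto_intros)
  then have "((\<lambda>t. ereal (A * t)) \<longlongrightarrow> 0) (at_right 0)"
    by (simp add: zero_ereal_def)
  then show "(modulus_cont f \<longlongrightarrow> 0) (at_right 0)"
    by (rule tendsto_sandwich[OF lower bounded tendsto_const])
  show "\<forall>t>0. 0 < modulus_exp f t"
  proof (intro allI impI)
    fix t :: real
    assume "t > 0"
    have "ereal (t / A) \<le> modulus_exp f t"
      unfolding modulus_exp_def
    proof (rule INF_greatest)
      fix p :: "'a \<times> 'a"
      assume "p \<in> {p. t \<le> dist (fst p) (snd p)}"
      then have "t \<le> A * dist (f (fst p)) (f (snd p))"
        using co_Lip[of "fst p" "snd p"] by simp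
      then show "ereal (t / A) \<le> ereal (dist (f (fst p)) (f (snd p)))"
        using \<open>A > 0\<close> by (simp add: divide_le_eq mult.commute)
    qed
    moreover have "0 < ereal (t / A)" using \<open>t > 0\<close> \<open>A > 0\<close> by simp
    ultimately show "0 < modulus_exp f t" by (rule order.strict_trans2[rotated])
  qed
qed

lemma is_cover_vimage: "is_cover UNIV \<V> \<Longrightarrow> is_cover UNIV ((\<lambda>V. f -` V) ` \<V>)"
  unfolding is_cover_def by (auto, metis UNIV_I Union_iff)

lemma point_finite_vimage:
  assumes "point_finite \<V>"
  shows "point_finite ((\<lambda>V. f -` V) ` \<V>)"
  unfolding point_finite_def
proof
  fix x
  have "{U \<in> (\<lambda>V. f -` V) ` \<V>. x \<in> U} \<subseteq> (\<lambda>V. f -` V) ` {V \<in> \<V>. f x \<in> V}"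
    by auto
  moreover have "finite {V \<in> \<V>. f x \<in> V}"
    using assms unfolding point_finite_def by simp
  ultimately show "finite {U \<in> (\<lambda>V. f -` V) ` \<V>. x \<in> U}"
    by (meson finite_surj)
qed

lemma cover_diam_vimage_le:
  assumes "cover_diam \<V> \<le> ereal s" and "0 \<le> r"
    and expand: "\<And>x y. dist (f x) (f y) \<le> s \<Longrightarrow> dist x y \<le> r"
  shows "cover_diam ((\<lambda>V. f -` V) ` \<V>) \<le> ereal r"
  unfolding cover_diam_def
proof (rule SUP_least)
  fix U
  assume "U \<in> (\<lambda>V. f -` V) ` \<V>"
  then obtain V where V: "V \<in> \<V>" "U = f -` V" by auto
  show "ediam U \<le> ereal r"
  proof (rule ediam_le)
    fix x y
    assume "x \<in> U" "y \<in> U"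
    then have "ereal (dist (f x) (f y)) \<le> ediam V"
      using V by (auto intro: dist_le_ediam)
    also have "\<dots> \<le> cover_diam \<V>"
      unfolding cover_diam_def using V by (auto intro: SUP_upper)
    also have "\<dots> \<le> ereal s" by fact
    finally show "ereal (dist x y) \<le> ereal r"
      using expand by simp
  qed (use \<open>0 \<le> r\<close> in simp)
qed

lemma less_Delta_uE:
  assumes "ereal a < Delta_u S r"
  obtains \<U> d where "is_cover S \<U>" "point_finite \<U>" "cover_diam \<U> \<le> ereal r" "a < d"
    "\<And>E. E \<subseteq> S \<Longrightarrow> ediam E < ereal d \<Longrightarrow> \<exists>U\<in>\<U>. E \<subseteq> U"
proof -
  obtain \<U> where \<U>: "is_cover S \<U>" "point_finite \<U>" "cover_diam \<U> \<le> ereal r"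
    "ereal a < lebesgue_number S \<U>"
    using assms unfolding Delta_u_def less_SUP_iff by auto
  then obtain d where "a < d" "\<forall>E. E \<subseteq> S \<and> ediam E < ereal d \<longrightarrow> (\<exists>U\<in>\<U>. E \<subseteq> U)"
    unfolding lebesgue_number_def less_SUP_iff by auto
  with \<U> that show thesis by blast
qed

lemma Delta_u_ge_vimage:
  fixes f :: "'a::metric_space \<Rightarrow> 'b::metric_space"
  assumes "is_cover UNIV \<V>" "point_finite \<V>" "cover_diam \<V> \<le> ereal s"
    and lebesgue: "\<And>E::'b set. ediam E < ereal d \<Longrightarrow> \<exists>V\<in>\<V>. E \<subseteq> V"
    and expand: "\<And>x y. dist (f x) (f y) \<le> s \<Longrightarrow> dist x y \<le> r"
    and contract: "\<And>E. ediam E < ereal \<delta> \<Longrightarrow> ediam (f ` E) < ereal d"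
    and "0 \<le> \<delta>" "0 \<le> r"
  shows "ereal \<delta> \<le> Delta_u (UNIV::'a set) r"
proof -
  let ?\<U> = "(\<lambda>V. f -` V) ` \<V>"
  have "\<exists>U\<in>?\<U>. E \<subseteq> U" if "ediam E < ereal \<delta>" for E
  proof -
    from lebesgue[OF contract[OF that]] obtain V where "V \<in> \<V>" "f ` E \<subseteq> V" ..
    then show ?thesis by blast
  qed
  then have "ereal \<delta> \<le> lebesgue_number UNIV ?\<U>"
    unfolding lebesgue_number_def using \<open>0 \<le> \<delta>\<close> by (intro SUP_upper2[of \<delta>]) auto
  also have "\<dots> \<le> Delta_u (UNIV::'a set) r"
    unfolding Delta_u_def
    by (rule SUP_upper)
       (use assms in \<open>simp add: is_cover_vimage point_finite_vimage cover_diam_vimage_le\<close>)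
  finally show ?thesis .
qed

lemma Delta_u_pos_if_uniform_embedding:
  fixes f :: "'a::metric_space \<Rightarrow> 'b::metric_space"
  assumes Y_stone: "\<forall>r>0. Delta_u (UNIV::'b set) r > 0"
    and "uniform_embedding f" and "r > 0"
  shows "Delta_u (UNIV::'a set) r > 0"
proof -
  have lim: "(modulus_cont f \<longlongrightarrow> 0) (at_right 0)" and "modulus_exp f r > 0"
    using assms unfolding uniform_embedding_def by auto
  then obtain s where "0 < ereal s" and s: "ereal s < modulus_exp f r"
    using ereal_dense2 by blast
  then have "ereal 0 < Delta_u (UNIV::'b set) s"
    using Y_stone by (simp add: zero_ereal_def)
  then obtain \<V> d where \<V>: "is_cover UNIV \<V>" "point_finite \<V>" "cover_diam \<V> \<le> ereal s"
    and "0 < d" and lebesgue: "\<And>E::'b set. ediam E < ereal d \<Longrightarrow> \<exists>V\<in>\<V>. E \<subseteq> V"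
    by (rule less_Delta_uE) blast
  have "\<forall>\<^sub>F t in at_right 0. modulus_cont f t < ereal d"
    using order_tendstoD(2)[OF lim] \<open>0 < d\<close> by (simp add: zero_ereal_def)
  then obtain \<delta> where "\<delta> > 0" and \<delta>: "\<And>t. 0 < t \<Longrightarrow> t < \<delta> \<Longrightarrow> modulus_cont f t < ereal d"
    unfolding eventually_at_right[OF zero_less_one] by auto
  have "dist x y \<le> r" if "dist (f x) (f y) \<le> s" for x y
  proof (rule ccontr)
    assume "\<not> dist x y \<le> r"
    then have "modulus_exp f r \<le> ereal (dist (f x) (f y))"
      by (intro modulus_exp_le_dist) simp
    from less_le_trans[OF s this] have "s < dist (f x) (f y)" by simp
    with that show False by simp
  qed
  moreover have "ediam (f ` E) < ereal d" if E: "ediam E < ereal \<delta>" for E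
  proof -
    obtain e where e: "0 < e" "e < \<delta>" and "\<And>x y. x \<in> E \<Longrightarrow> y \<in> E \<Longrightarrow> dist x y \<le> e"
      using ediam_lessE[OF E] by blast
    then have "ediam (f ` E) \<le> modulus_cont f e"
      by (intro ediam_image_le dist_le_modulus_cont modulus_cont_nonneg) auto
    also have "\<dots> < ereal d" using \<delta> e by blast
    finally show ?thesis .
  qed
  ultimately have "ereal \<delta> \<le> Delta_u (UNIV::'a set) r"
    using \<open>\<delta> > 0\<close> \<open>r > 0\<close> by (intro Delta_u_ge_vimage[OF \<V> lebesgue]) auto
  with \<open>\<delta> > 0\<close> show ?thesis
    by (meson ereal_less(2) order.strict_trans2)
qed

lemma Delta_u_ge_linear_if_bilipschitz:
  fixes f :: "'a::metric_space \<Rightarrow> 'b::metric_space"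
  assumes Y_linear: "\<forall>r>0. ereal (c * r) \<le> Delta_u (UNIV::'b set) r" and "c > 0"
    and "L\<^sub>1 > 0" and Lip: "\<And>x y. dist (f x) (f y) \<le> L\<^sub>1 * dist x y"
    and "L\<^sub>2 > 0" and co_Lip: "\<And>x y. dist x y \<le> L\<^sub>2 * dist (f x) (f y)"
    and "r > 0"
  shows "ereal (c * r / (L\<^sub>1 * L\<^sub>2)) \<le> Delta_u (UNIV::'a set) r"
proof (rule dense_le_bounded[of 0])
  show "0 < ereal (c * r / (L\<^sub>1 * L\<^sub>2))"
    using assms by simp
next
  fix w
  assume "0 < w" "w < ereal (c * r / (L\<^sub>1 * L\<^sub>2))"
  then obtain \<delta> where w: "w = ereal \<delta>" and "0 < \<delta>" and \<delta>: "\<delta> < c * r / (L\<^sub>1 * L\<^sub>2)"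
    by (cases w) auto
  define s where "s = r / L\<^sub>2"
  have "s > 0" using \<open>r > 0\<close> \<open>L\<^sub>2 > 0\<close> by (simp add: s_def)
  have "\<delta> * L\<^sub>1 < c * s"
    using \<delta> \<open>L\<^sub>1 > 0\<close> \<open>L\<^sub>2 > 0\<close> by (simp add: s_def field_simps)
  then have "ereal (\<delta> * L\<^sub>1) < ereal (c * s)" by simp
  also have "\<dots> \<le> Delta_u (UNIV::'b set) s"
    using Y_linear \<open>s > 0\<close> by blast
  finally have "ereal (\<delta> * L\<^sub>1) < Delta_u (UNIV::'b set) s" .
  then obtain \<V> d where \<V>: "is_cover UNIV \<V>" "point_finite \<V>" "cover_diam \<V> \<le> ereal s"
    and "\<delta> * L\<^sub>1 < d" and lebesgue: "\<And>E::'b set. ediam E < ereal d \<Longrightarrow> \<exists>V\<in>\<V>. E \<subseteq> V"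
    by (rule less_Delta_uE) blast
  have "dist x y \<le> r" if "dist (f x) (f y) \<le> s" for x y
  proof -
    have "dist x y \<le> L\<^sub>2 * dist (f x) (f y)" by (rule co_Lip)
    also have "\<dots> \<le> L\<^sub>2 * s" using that \<open>L\<^sub>2 > 0\<close> by simp
    finally show ?thesis using \<open>L\<^sub>2 > 0\<close> by (simp add: s_def)
  qed
  moreover have "ediam (f ` E) < ereal d" if E: "ediam E < ereal \<delta>" for E
  proof -
    obtain e where "0 < e" "e < \<delta>" and e: "\<And>x y. x \<in> E \<Longrightarrow> y \<in> E \<Longrightarrow> dist x y \<le> e"
      using ediam_lessE[OF E] by blast
    have "ediam (f ` E) \<le> ereal (L\<^sub>1 * e)"
    proof (rule ediam_image_le)
      fix x y
      assume "x \<in> E" "y \<in> E"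
      then show "ereal (dist (f x) (f y)) \<le> ereal (L\<^sub>1 * e)"
        using Lip[of x y] e[of x y] \<open>L\<^sub>1 > 0\<close> by (simp add: order.trans)
    qed (use \<open>0 < e\<close> \<open>L\<^sub>1 > 0\<close> in simp)
    also have "L\<^sub>1 * e < L\<^sub>1 * \<delta>"
      using \<open>e < \<delta>\<close> \<open>L\<^sub>1 > 0\<close> by simp
    also have "\<dots> < d"
      using \<open>\<delta> * L\<^sub>1 < d\<close> by (simp add: mult.commute)
    finally show ?thesis by simp
  qed
  ultimately show "w \<le> Delta_u (UNIV::'a set) r"
    unfolding w using \<open>0 < \<delta>\<close> \<open>r > 0\<close> by (intro Delta_u_ge_vimage[OF \<V> lebesgue]) auto
qed

lemma Lip_on_le:
  assumes "\<And>x y. x \<in> S \<Longrightarrow> y \<in> S \<Longrightarrow> dist (g x) (g y) \<le> A * dist x y"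
  shows "Lip_on S g \<le> ereal A"
  unfolding Lip_on_def
proof (rule SUP_least)
  fix p :: "'a \<times> 'a"
  assume "p \<in> {p. fst p \<in> S \<and> snd p \<in> S \<and> fst p \<noteq> snd p}"
  then show "ereal (dist (g (fst p)) (g (snd p)) / dist (fst p) (snd p)) \<le> ereal A"
    using assms[of "fst p" "snd p"] by (simp add: pos_divide_le_eq)
qed

lemma Lip_on_ge:
  "x \<in> S \<Longrightarrow> y \<in> S \<Longrightarrow> x \<noteq> y \<Longrightarrow> ereal (dist (g x) (g y) / dist x y) \<le> Lip_on S g"
  unfolding Lip_on_def by (intro SUP_upper2[of "(x, y)"]) auto

lemma dist_le_Lip_on:
  assumes "Lip_on S g = ereal L" and "x \<in> S" "y \<in> S"
  shows "dist (g x) (g y) \<le> L * dist x y"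
proof (cases "x = y")
  case False
  with Lip_on_ge[OF assms(2,3) False, of g] assms(1) show ?thesis
    by (simp add: pos_divide_le_eq)
qed simp

lemma Lip_on_realE:
  assumes "\<And>x y. x \<in> S \<Longrightarrow> y \<in> S \<Longrightarrow> dist (g x) (g y) \<le> A * dist x y"
    and "a \<in> S" "b \<in> S" "g a \<noteq> g b"
  obtains L where "L > 0" "Lip_on S g = ereal L"
proof -
  have "a \<noteq> b" using assms(4) by auto
  then have "ereal (dist (g a) (g b) / dist a b) \<le> Lip_on S g"
    using assms(2,3) by (rule Lip_on_ge[rotated 2])
  moreover have "0 < dist (g a) (g b) / dist a b"
    using \<open>a \<noteq> b\<close> assms(4) by simp
  moreover have "Lip_on S g \<le> ereal A"
    using assms(1) by (rule Lip_on_le)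
  ultimately show thesis
    using that by (cases "Lip_on S g") auto
qed

lemma bilipschitz_embeddingE:
  assumes "bilipschitz_embedding f"
  obtains A where "A \<ge> 1" "\<And>x y. dist (f x) (f y) \<le> A * dist x y"
    "\<And>x y. dist x y \<le> A * dist (f x) (f y)"
proof -
  obtain A where "A \<ge> 1"
    and bounds: "\<And>t. modulus_cont f t \<le> ereal (A * t) \<and> ereal (t / A) \<le> modulus_exp f t"
    using assms unfolding bilipschitz_embedding_def by blast
  have "dist (f x) (f y) \<le> A * dist x y" for x y
    using order.trans[OF dist_le_modulus_cont[OF order.refl] conjunct1[OF bounds]] by simp
  moreover have "dist x y \<le> A * dist (f x) (f y)" for x y
  proof -
    have "ereal (dist x y / A) \<le> ereal (dist (f x) (f y))"
      using order.trans[OF conjunct2[OF bounds] modulus_exp_le_dist[OF order.refl]] .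
    with \<open>A \<ge> 1\<close> show ?thesis by (simp add: divide_le_eq mult.commute)
  qed
  ultimately show thesis using that \<open>A \<ge> 1\<close> by blast
qed

lemma distortion_bilipschitzE:
  fixes f :: "'a::metric_space \<Rightarrow> 'b::metric_space" and a b :: 'a
  assumes Lip: "\<And>x y. dist (f x) (f y) \<le> A * dist x y"
    and co_Lip: "\<And>x y. dist x y \<le> A * dist (f x) (f y)"
    and "a \<noteq> b"
  obtains L\<^sub>1 L\<^sub>2 where "L\<^sub>1 > 0" "L\<^sub>2 > 0" "distortion f = ereal (L\<^sub>1 * L\<^sub>2)"
    "\<And>x y. dist (f x) (f y) \<le> L\<^sub>1 * dist x y" "\<And>x y. dist x y \<le> L\<^sub>2 * dist (f x) (f y)"
proof -
  have "inj f"
  proof (rule injI)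
    fix x y
    assume "f x = f y"
    with co_Lip[of x y] show "x = y" by simp
  qed
  then have fab: "f a \<noteq> f b" using \<open>a \<noteq> b\<close> by (auto dest: injD)
  obtain L\<^sub>1 where "L\<^sub>1 > 0" and L\<^sub>1: "Lip_on UNIV f = ereal L\<^sub>1"
    by (rule Lip_on_realE[of UNIV f A a b]) (use Lip fab in auto)
  have inv_Lip: "dist (inv f u) (inv f v) \<le> A * dist u v" if "u \<in> range f" "v \<in> range f" for u v
    using that co_Lip \<open>inj f\<close> by auto
  obtain L\<^sub>2 where "L\<^sub>2 > 0" and L\<^sub>2: "Lip_on (range f) (inv f) = ereal L\<^sub>2"
    by (rule Lip_on_realE[of "range f" "inv f" A "f a" "f b"]) (use inv_Lip \<open>inj f\<close> \<open>a \<noteq> b\<close> in auto)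
  have "dist x y \<le> L\<^sub>2 * dist (f x) (f y)" for x y
    using dist_le_Lip_on[OF L\<^sub>2, of "f x" "f y"] \<open>inj f\<close> by simp
  moreover have "distortion f = ereal (L\<^sub>1 * L\<^sub>2)"
    unfolding distortion_def L\<^sub>1 L\<^sub>2 by simp
  ultimately show thesis
    using that[OF \<open>L\<^sub>1 > 0\<close> \<open>L\<^sub>2 > 0\<close>] dist_le_Lip_on[OF L\<^sub>1 UNIV_I UNIV_I] by blast
qed

text \<open>On a one-point space both Lipschitz constants are suprema over the empty set, i.e. \<open>-\<infinity>\<close>,
  so their product is \<open>\<infinity>\<close>.\<close>

lemma distortion_singleton:
  fixes f :: "'a::metric_space \<Rightarrow> 'b::metric_space"
  assumes "\<And>a b::'a. a = b"
  shows "distortion f = \<infinity>"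
proof -
  have range_trivial: "u = v" if "u \<in> range f" "v \<in> range f" for u v
    using that assms by (metis rangeE)
  have no_pairs: "{p::'a \<times> 'a. fst p \<in> UNIV \<and> snd p \<in> UNIV \<and> fst p \<noteq> snd p} = {}"
    using assms by blast
  have no_image_pairs: "{p. fst p \<in> range f \<and> snd p \<in> range f \<and> fst p \<noteq> snd p} = {}"
    using range_trivial by blast
  show ?thesis
    unfolding distortion_def Lip_on_def no_pairs no_image_pairs by (simp add: bot_ereal_def)
qed

lemma Delta_u_ge_linear_div_distortion:
  fixes f :: "'a::metric_space \<Rightarrow> 'b::metric_space"
  assumes Y_stone: "\<forall>r>0. Delta_u (UNIV::'b set) r > 0"
    and Y_linear: "\<forall>r>0. ereal (c * r) \<le> Delta_u (UNIV::'b set) r" and "c > 0"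
    and "bilipschitz_embedding f" and "r > 0"
  shows "ereal c / distortion f * ereal r \<le> Delta_u (UNIV::'a set) r"
proof -
  obtain A where "A \<ge> 1" and Lip: "\<And>x y. dist (f x) (f y) \<le> A * dist x y"
    and co_Lip: "\<And>x y. dist x y \<le> A * dist (f x) (f y)"
    using bilipschitz_embeddingE[OF \<open>bilipschitz_embedding f\<close>] by blast
  show ?thesis
  proof (cases "\<exists>a b::'a. a \<noteq> b")
    case True
    then obtain a b :: 'a where "a \<noteq> b" by blast
    obtain L\<^sub>1 L\<^sub>2 where "L\<^sub>1 > 0" "L\<^sub>2 > 0" and distortion_eq: "distortion f = ereal (L\<^sub>1 * L\<^sub>2)"
      and "\<And>x y. dist (f x) (f y) \<le> L\<^sub>1 * dist x y" "\<And>x y. dist x y \<le> L\<^sub>2 * dist (f x) (f y)"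
      using distortion_bilipschitzE[OF Lip co_Lip \<open>a \<noteq> b\<close>] by blast
    with Y_linear \<open>c > 0\<close> \<open>r > 0\<close> have "ereal (c * r / (L\<^sub>1 * L\<^sub>2)) \<le> Delta_u (UNIV::'a set) r"
      by (intro Delta_u_ge_linear_if_bilipschitz) auto
    with \<open>L\<^sub>1 > 0\<close> \<open>L\<^sub>2 > 0\<close> show ?thesis
      unfolding distortion_eq by (simp add: ereal_divide)
  next
    case False
    have "A > 0" using \<open>A \<ge> 1\<close> by simp
    then have "uniform_embedding f"
      using Lip co_Lip by (rule uniform_embedding_if_bilipschitz)
    with Y_stone \<open>r > 0\<close> have "0 < Delta_u (UNIV::'a set) r"
      by (intro Delta_u_pos_if_uniform_embedding)
    with False show ?thesis
      by (simp add: distortion_singleton)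
  qed
qed

theorem proposition3p8:
  fixes f :: "'a::metric_space \<Rightarrow> 'b::metric_space" and c :: real
  assumes Ystone: "\<forall>r>0. Delta_u (UNIV::'b set) r > 0"
  shows "(uniform_embedding f \<longrightarrow> (\<forall>r>0. Delta_u (UNIV::'a set) r > 0)) \<and>
         (bilipschitz_embedding f \<and> c > 0 \<and> (\<forall>r>0. Delta_u (UNIV::'b set) r \<ge> ereal (c * r))
            \<longrightarrow> (\<forall>r>0. Delta_u (UNIV::'a set) r \<ge> ereal c / distortion f * ereal r))"
  using Delta_u_pos_if_uniform_embedding[OF Ystone, of f]
    Delta_u_ge_linear_div_distortion[OF Ystone, of c f]
  by blast

end
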